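(* A norm $\gamma$ on $\mathbb{R}^d$ is uniformly robust if and only if $\mathrm{EH}_\gamma(A)$ is bounded for every finite set $A\subset\mathbb{R}^d$.
   Context: A norm is a symmetric gauge (Minkowski functional of a symmetric convex compact set $B_\gamma$ with $0$ in its interior); its skewness $\sigma=\sup_{x\ne0}\gamma(x)/\gamma(-x)$ equals $1$. $\gamma^\circ$ is the dual norm with unit ball $B_{\gamma^\circ}$. For weighted sets, $(D,w)+(C,v)$ is $D\cup C$ with weights added at common points. A Fermat–Weber point of a finite positively weighted set is a minimizer of $x\mapsto\sum_s u_s\gamma(x-s)$. The gauge $\gamma$ is called uniformly robust if for every finite set $D$ with positive weights $w$ (total $w_D$) there is a bounded set $K$ such that for every finite set $C$ with positive weights $v$ satisfying $\sigma v_C<w_D$, all Fermat–Weber points of $(D,w)+(C,v)$ lie in $K$. For $p\in B_{\gamma^\circ}$: if $\gamma^\circ(p)=1$, $N(p)=\mathbb{R}_{\ge0}F(p)$ with $F(p)=\{x\in B_\gamma:\langle p,x\rangle=1\}$; otherwise $N(p)=\{0\}$. For finite $S$ and $\pi=(p_s)_{s\in S}\subset B_{\gamma^\circ}$, $C_\pi=\bigcap_{s\in S}(s+N(p_s))$; a nonempty $C_\pi$ is an elementary convex set for $S$; $\mathrm{EH}_\gamma(S)$ is the union of all bounded elementary convex sets for $S$. *)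

theory Defs
  imports "HOL-Analysis.Analysis"
begin

definition is_norm :: "('a::euclidean_space \<Rightarrow> real) \<Rightarrow> bool" where
  "is_norm \<gamma> \<longleftrightarrow>
     (\<forall>x. 0 \<le> \<gamma> x) \<and> (\<forall>x. \<gamma> x = 0 \<longleftrightarrow> x = 0) \<and>
     (\<forall>x y. \<gamma> (x + y) \<le> \<gamma> x + \<gamma> y) \<and>
     (\<forall>c x. \<gamma> (c *\<^sub>R x) = \<bar>c\<bar> * \<gamma> x)"

definition skewness :: "('a::euclidean_space \<Rightarrow> real) \<Rightarrow> real" where
  "skewness \<gamma> = (SUP x\<in>UNIV - {0}. \<gamma> x / \<gamma> (- x))"

definition unit_ball :: "('a::euclidean_space \<Rightarrow> real) \<Rightarrow> 'a set" where
  "unit_ball \<gamma> = {x. \<gamma> x \<le> 1}"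

definition dual_gauge :: "('a::euclidean_space \<Rightarrow> real) \<Rightarrow> 'a \<Rightarrow> real" where
  "dual_gauge \<gamma> p = Sup {inner p x | x. \<gamma> x \<le> 1}"

definition fw_objective :: "('a::euclidean_space \<Rightarrow> real) \<Rightarrow> 'a set \<Rightarrow> ('a \<Rightarrow> real) \<Rightarrow> 'a \<Rightarrow> real" where
  "fw_objective \<gamma> S u x = (\<Sum>s\<in>S. u s * \<gamma> (x - s))"

definition is_FW_point :: "('a::euclidean_space \<Rightarrow> real) \<Rightarrow> 'a set \<Rightarrow> ('a \<Rightarrow> real) \<Rightarrow> 'a \<Rightarrow> bool" where
  "is_FW_point \<gamma> S u x \<longleftrightarrow> (\<forall>y. fw_objective \<gamma> S u x \<le> fw_objective \<gamma> S u y)"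

text \<open>Sum of weighted sets: (D,w)+(C,v) = (D \<union> C, weights added at common points).\<close>
definition wsum_weights :: "'a set \<Rightarrow> ('a \<Rightarrow> real) \<Rightarrow> 'a set \<Rightarrow> ('a \<Rightarrow> real) \<Rightarrow> 'a \<Rightarrow> real" where
  "wsum_weights D w C v s = (if s \<in> D then w s else 0) + (if s \<in> C then v s else 0)"

definition uniformly_robust :: "('a::euclidean_space \<Rightarrow> real) \<Rightarrow> bool" where
  "uniformly_robust \<gamma> \<longleftrightarrow>
     (\<forall>D w. finite D \<and> (\<forall>s\<in>D. 0 < w s) \<longrightarrow>
        (\<exists>K. bounded K \<and>
           (\<forall>C v. finite C \<and> (\<forall>s\<in>C. 0 < v s) \<and> skewness \<gamma> * sum v C < sum w D \<longrightarrow>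
              {x. is_FW_point \<gamma> (D \<union> C) (wsum_weights D w C v) x} \<subseteq> K)))"

definition face :: "('a::euclidean_space \<Rightarrow> real) \<Rightarrow> 'a \<Rightarrow> 'a set" where
  "face \<gamma> p = {x \<in> unit_ball \<gamma>. inner p x = 1}"

definition ncone :: "('a::euclidean_space \<Rightarrow> real) \<Rightarrow> 'a \<Rightarrow> 'a set" where
  "ncone \<gamma> p = (if dual_gauge \<gamma> p = 1 then {t *\<^sub>R x | t x. 0 \<le> t \<and> x \<in> face \<gamma> p} else {0})"

text \<open>C_pi = intersection over s in S of (s + N(p_s)); for S empty this is UNIV.\<close>
definition elem_set :: "('a::euclidean_space \<Rightarrow> real) \<Rightarrow> 'a set \<Rightarrow> ('a \<Rightarrow> 'a) \<Rightarrow> 'a set" where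
  "elem_set \<gamma> S p = (\<Inter>s\<in>S. (\<lambda>y. s + y) ` ncone \<gamma> (p s))"

definition EH :: "('a::euclidean_space \<Rightarrow> real) \<Rightarrow> 'a set \<Rightarrow> 'a set" where
  "EH \<gamma> S = \<Union> {E. \<exists>p. (\<forall>s\<in>S. p s \<in> unit_ball (dual_gauge \<gamma>)) \<and>
                       E = elem_set \<gamma> S p \<and> E \<noteq> {} \<and> bounded E}"

end

theory Submission
  imports Defs
begin

text \<open>Write \<open>\<partial>\<gamma>(z)\<close> for the set of \<open>p\<close> with \<open>\<gamma>\<degree>(p) \<le> 1\<close> and \<open>\<langle>p,z\<rangle> = \<gamma>(z)\<close>; then
  \<open>C\<^sub>\<pi> = {y. p\<^sub>s \<in> \<partial>\<gamma>(y - s) for all s}\<close>. A nonempty \<open>C\<^sub>\<pi>\<close> is bounded iff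
  \<open>\<gamma>\<degree>(\<Sum> w\<^sub>s p\<^sub>s) < \<Sum> w\<^sub>s\<close> for positive weights \<open>w\<close>: a strict inequality bounds \<open>\<gamma>\<close> on \<open>C\<^sub>\<pi>\<close>
  linearly, while in case of equality a maximiser \<open>x\<close> of \<open>\<langle>\<Sum> w\<^sub>s p\<^sub>s, x\<rangle>\<close> on the unit sphere has
  \<open>\<langle>p\<^sub>s,x\<rangle> = \<gamma>(x)\<close> for all \<open>s\<close>, so \<open>C\<^sub>\<pi>\<close> contains a ray in direction \<open>x\<close>.

  A Fermat--Weber point \<open>x\<close> of \<open>(S,u)\<close> admits subgradients \<open>p\<^sub>s \<in> \<partial>\<gamma>(x - s)\<close> with
  \<open>\<Sum> u\<^sub>s p\<^sub>s = 0\<close>. For \<open>(D,w)+(C,v)\<close> this gives \<open>\<Sum>\<^sub>D w\<^sub>s p\<^sub>s = -\<Sum>\<^sub>C v\<^sub>s p\<^sub>s\<close>, hence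
  \<open>\<gamma>\<degree>(\<Sum>\<^sub>D w\<^sub>s p\<^sub>s) \<le> v\<^sub>C < w\<^sub>D\<close>, so \<open>x\<close> lies in a bounded elementary set for \<open>D\<close> and
  \<open>K = EH\<^sub>\<gamma>(D)\<close> witnesses uniform robustness. Conversely, a point \<open>y\<close> of a bounded elementary set for
  \<open>A\<close> satisfies \<open>\<gamma>\<degree>(\<Sum> p\<^sub>s) < |A|\<close>; giving \<open>y\<close> a weight \<open>v\<close> between the two makes \<open>y\<close> a
  Fermat--Weber point of \<open>A\<close> with unit weights plus \<open>y\<close>, and \<open>v < |A|\<close>, so uniform robustness
  confines \<open>y\<close> to one bounded set.\<close>

lemma common_convergent_subseq:
  fixes f :: "'i \<Rightarrow> nat \<Rightarrow> 'a::first_countable_topology"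
  assumes "finite S" "compact K" "\<forall>s\<in>S. \<forall>n. f s n \<in> K"
  obtains r l where "strict_mono r" "\<forall>s\<in>S. l s \<in> K \<and> (f s \<circ> r) \<longlonglongrightarrow> l s"
  using assms
proof (induction S arbitrary: thesis rule: finite_induct)
  case empty
  show ?case by (rule empty(1)[of id]) (auto simp: strict_mono_def)
next
  case (insert a S)
  obtain r l where r: "strict_mono r" "\<forall>s\<in>S. l s \<in> K \<and> (f s \<circ> r) \<longlonglongrightarrow> l s"
    using insert by blast
  obtain la r' where r': "la \<in> K" "strict_mono r'" "(f a \<circ> r \<circ> r') \<longlonglongrightarrow> la"
    using seq_compactE[OF compact_imp_seq_compact[OF insert(5)], of "f a \<circ> r"] insert(6) by auto
  have "(\<lambda>n. f s (r (r' n))) \<longlonglongrightarrow> l s" if "s \<in> S" for s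
    using LIMSEQ_subseq_LIMSEQ[OF _ r'(2), of "f s \<circ> r"] r(2) that by (simp add: o_def)
  moreover have "(\<lambda>n. f a (r (r' n))) \<longlonglongrightarrow> la"
    using r'(3) by (simp add: o_def)
  ultimately show ?case
  proof (intro insert(4)[of "r \<circ> r'" "l(a := la)"] ballI conjI)
    show "strict_mono (r \<circ> r')" using r(1) r'(2) strict_mono_o by blast
  qed (use r(2) r'(1) in auto)
qed

lemma compact_convex_weighted_sums:
  fixes P :: "'i \<Rightarrow> 'a::real_normed_vector set"
  assumes "finite S" "\<forall>s\<in>S. compact (P s) \<and> convex (P s)"
  shows "compact {\<Sum>s\<in>S. u s *\<^sub>R p s | p. \<forall>s\<in>S. p s \<in> P s} \<and>
         convex {\<Sum>s\<in>S. u s *\<^sub>R p s | p. \<forall>s\<in>S. p s \<in> P s}"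
  using assms
proof (induction S rule: finite_induct)
  case empty
  then show ?case by simp
next
  case (insert a S)
  let ?M = "{\<Sum>s\<in>S. u s *\<^sub>R p s | p. \<forall>s\<in>S. p s \<in> P s}"
  let ?Q = "(\<lambda>x. u a *\<^sub>R x) ` P a"
  have M: "compact ?M" "convex ?M" using insert by auto
  have Q: "compact ?Q" "convex ?Q" using insert(4) compact_scaling convex_scaling by auto
  have "{\<Sum>s\<in>insert a S. u s *\<^sub>R p s | p. \<forall>s\<in>insert a S. p s \<in> P s} = {x + y | x y. x \<in> ?Q \<and> y \<in> ?M}"
  proof (intro set_eqI iffI)
    fix z assume "z \<in> {\<Sum>s\<in>insert a S. u s *\<^sub>R p s | p. \<forall>s\<in>insert a S. p s \<in> P s}"
    then show "z \<in> {x + y | x y. x \<in> ?Q \<and> y \<in> ?M}" using insert(1,2) by fastforce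
  next
    fix z assume "z \<in> {x + y | x y. x \<in> ?Q \<and> y \<in> ?M}"
    then obtain q p where qp: "z = u a *\<^sub>R q + (\<Sum>s\<in>S. u s *\<^sub>R p s)" "q \<in> P a" "\<forall>s\<in>S. p s \<in> P s"
      by blast
    have "(\<Sum>s\<in>S. u s *\<^sub>R (p(a := q)) s) = (\<Sum>s\<in>S. u s *\<^sub>R p s)"
      using insert(2) by (intro sum.cong) auto
    then have "z = (\<Sum>s\<in>insert a S. u s *\<^sub>R (p(a := q)) s)" using qp insert(1,2) by simp
    moreover have "\<forall>s\<in>insert a S. (p(a := q)) s \<in> P s" using qp by auto
    ultimately show "z \<in> {\<Sum>s\<in>insert a S. u s *\<^sub>R p s | p. \<forall>s\<in>insert a S. p s \<in> P s}" by blast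
  qed
  moreover have "{x + y | x y. x \<in> ?Q \<and> y \<in> ?M} = (\<Union>x\<in>?Q. \<Union>y\<in>?M. {x + y})" by blast
  ultimately show ?case using compact_sums[OF Q(1) M(1)] convex_sums[OF Q(2) M(2)] by simp
qed

lemma sum_wsum_weights:
  fixes g :: "'a \<Rightarrow> 'b::real_vector"
  assumes "finite D" "finite C"
  shows "(\<Sum>s\<in>D \<union> C. wsum_weights D w C v s *\<^sub>R g s) = (\<Sum>s\<in>D. w s *\<^sub>R g s) + (\<Sum>s\<in>C. v s *\<^sub>R g s)"
proof -
  have "wsum_weights D w C v s *\<^sub>R g s =
        (if s \<in> D then w s *\<^sub>R g s else 0) + (if s \<in> C then v s *\<^sub>R g s else 0)" for s
    by (simp add: wsum_weights_def scaleR_add_left)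
  then have "(\<Sum>s\<in>D \<union> C. wsum_weights D w C v s *\<^sub>R g s) =
        (\<Sum>s\<in>D \<union> C. if s \<in> D then w s *\<^sub>R g s else 0) + (\<Sum>s\<in>D \<union> C. if s \<in> C then v s *\<^sub>R g s else 0)"
    by (simp add: sum.distrib)
  also have "\<dots> = (\<Sum>s\<in>D. w s *\<^sub>R g s) + (\<Sum>s\<in>C. v s *\<^sub>R g s)"
    using assms by (simp add: sum.inter_restrict[symmetric] Int_absorb1)
  finally show ?thesis .
qed

section \<open>Norms on Euclidean spaces\<close>

locale gauge_norm =
  fixes \<gamma> :: "'a::euclidean_space \<Rightarrow> real"
  assumes is_norm: "is_norm \<gamma>"
begin

lemma nonneg: "0 \<le> \<gamma> x"
  and eq_0_iff: "\<gamma> x = 0 \<longleftrightarrow> x = 0"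
  and triangle: "\<gamma> (x + y) \<le> \<gamma> x + \<gamma> y"
  and homogeneous: "\<gamma> (c *\<^sub>R x) = \<bar>c\<bar> * \<gamma> x"
  using is_norm unfolding is_norm_def by blast+

lemma zero [simp]: "\<gamma> 0 = 0"
  using eq_0_iff by blast

lemma pos: "x \<noteq> 0 \<Longrightarrow> 0 < \<gamma> x"
  using nonneg eq_0_iff by (simp add: order_less_le)

lemma minus [simp]: "\<gamma> (- x) = \<gamma> x"
  using homogeneous[of "-1" x] by simp

lemma diff_le: "\<gamma> x - \<gamma> y \<le> \<gamma> (x - y)"
  using triangle[of "x - y" y] by simp

lemma normalize: "x \<noteq> 0 \<Longrightarrow> \<gamma> ((1 / \<gamma> x) *\<^sub>R x) = 1"
  using pos[of x] by (simp add: homogeneous)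

lemma convex_on: "convex_on UNIV \<gamma>"
proof (rule convex_onI)
  fix t :: real and x y :: 'a assume "0 < t" "t < 1"
  then show "\<gamma> ((1 - t) *\<^sub>R x + t *\<^sub>R y) \<le> (1 - t) * \<gamma> x + t * \<gamma> y"
    using triangle[of "(1 - t) *\<^sub>R x" "t *\<^sub>R y"] by (simp add: homogeneous)
qed simp

lemma continuous_on: "continuous_on S \<gamma>"
  using convex_on_continuous[OF open_UNIV convex_on] continuous_on_subset by blast

lemma isCont: "isCont \<gamma> x"
  using continuous_on[of UNIV] by (simp add: continuous_on_eq_continuous_at)

lemma norm_equivalence: "\<exists>c C. 0 < c \<and> 0 \<le> C \<and> (\<forall>x. c * norm x \<le> \<gamma> x \<and> \<gamma> x \<le> C * norm x)"
proof -
  have "compact (sphere (0::'a) 1)" "sphere (0::'a) 1 \<noteq> {}" by simp_all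
  then obtain x0 x1 where x0: "x0 \<in> sphere 0 1" "\<And>y. y \<in> sphere 0 1 \<Longrightarrow> \<gamma> x0 \<le> \<gamma> y"
    and x1: "\<And>y. y \<in> sphere 0 1 \<Longrightarrow> \<gamma> y \<le> \<gamma> x1"
    using continuous_attains_inf[OF _ _ continuous_on] continuous_attains_sup[OF _ _ continuous_on]
    by metis
  have "\<gamma> x0 * norm x \<le> \<gamma> x \<and> \<gamma> x \<le> \<gamma> x1 * norm x" for x
  proof (cases "x = 0")
    case False
    then have "(1 / norm x) *\<^sub>R x \<in> sphere 0 1" by simp
    then have "\<gamma> x0 \<le> \<gamma> ((1 / norm x) *\<^sub>R x) \<and> \<gamma> ((1 / norm x) *\<^sub>R x) \<le> \<gamma> x1"
      using x0(2) x1 by blast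
    then have "\<gamma> x0 \<le> \<gamma> x / norm x \<and> \<gamma> x / norm x \<le> \<gamma> x1" by (simp add: homogeneous)
    then show ?thesis using False by (simp add: field_simps)
  qed simp
  moreover have "0 < \<gamma> x0" using x0(1) pos[of x0] by (metis norm_zero mem_sphere_0 zero_neq_one)
  ultimately show ?thesis using nonneg[of x1] by blast
qed

lemma bounded_iff_gauge_bounded: "bounded X \<longleftrightarrow> (\<exists>B. \<forall>x\<in>X. \<gamma> x \<le> B)"
proof -
  obtain c C where c: "0 < c" "0 \<le> C" "\<And>x. c * norm x \<le> \<gamma> x" "\<And>x. \<gamma> x \<le> C * norm x"
    using norm_equivalence by blast
  show ?thesis unfolding bounded_iff
  proof
    assume "\<exists>B. \<forall>x\<in>X. norm x \<le> B"
    then obtain B where "\<forall>x\<in>X. norm x \<le> B" ..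
    then have "\<forall>x\<in>X. \<gamma> x \<le> C * B" using c(2,4) by (blast intro: order_trans mult_left_mono)
    then show "\<exists>B. \<forall>x\<in>X. \<gamma> x \<le> B" ..
  next
    assume "\<exists>B. \<forall>x\<in>X. \<gamma> x \<le> B"
    then obtain B where "\<forall>x\<in>X. \<gamma> x \<le> B" ..
    then have "\<forall>x\<in>X. c * norm x \<le> B" using c(3) by (blast intro: order_trans)
    then have "\<forall>x\<in>X. norm x \<le> B / c" using c(1) by (simp add: pos_le_divide_eq mult.commute)
    then show "\<exists>B. \<forall>x\<in>X. norm x \<le> B" ..
  qed
qed

lemma compact_unit_sphere: "compact {x. \<gamma> x = 1}"
proof -
  have "closed {x. \<gamma> x = 1}" using closed_Collect_eq[OF continuous_on continuous_on_const] by simp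
  moreover have "bounded {x. \<gamma> x = 1}" unfolding bounded_iff_gauge_bounded by auto
  ultimately show ?thesis by (simp add: compact_eq_bounded_closed)
qed

lemma skewness_eq_1: "skewness \<gamma> = 1"
proof -
  have "(\<lambda>x. \<gamma> x / \<gamma> (- x)) ` (UNIV - {0}) = (\<lambda>x. 1) ` (UNIV - {0::'a})"
    by (intro image_cong) (auto simp: eq_0_iff)
  moreover have "UNIV - {0::'a} \<noteq> {}"
    using nonempty_Basis nonzero_Basis by blast
  ultimately show ?thesis unfolding skewness_def by simp
qed

section \<open>Dual norm, subgradients and elementary sets\<close>

definition dual_ball :: "'a set" where
  "dual_ball = {p. \<forall>y. p \<bullet> y \<le> \<gamma> y}"

definition subgrad :: "'a \<Rightarrow> 'a set" where
  "subgrad z = {p \<in> dual_ball. p \<bullet> z = \<gamma> z}"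

lemma dual_gauge_maximizer:
  obtains x where "\<gamma> x = 1" "p \<bullet> x = dual_gauge \<gamma> p" "\<And>z. p \<bullet> z \<le> dual_gauge \<gamma> p * \<gamma> z"
proof -
  obtain b :: 'a where "b \<noteq> 0" using nonempty_Basis nonzero_Basis by blast
  then have "{x. \<gamma> x = 1} \<noteq> {}" using normalize by blast
  then obtain x where x: "\<gamma> x = 1" "\<And>y. \<gamma> y = 1 \<Longrightarrow> p \<bullet> y \<le> p \<bullet> x"
    using continuous_attains_sup[OF compact_unit_sphere _ continuous_on_inner[OF continuous_on_const continuous_on_id]]
    by auto
  have le: "p \<bullet> z \<le> (p \<bullet> x) * \<gamma> z" for z
  proof (cases "z = 0")
    case False
    then have "p \<bullet> ((1 / \<gamma> z) *\<^sub>R z) \<le> p \<bullet> x" using x(2) normalize by blast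
    then show ?thesis using pos[OF False] by (simp add: divide_le_eq mult.commute)
  qed simp
  have "0 \<le> p \<bullet> x" using le[of "- x"] x(1) by simp
  have "dual_gauge \<gamma> p = p \<bullet> x"
    unfolding dual_gauge_def
  proof (rule cSup_eq_maximum)
    show "p \<bullet> x \<in> {p \<bullet> y | y. \<gamma> y \<le> 1}" using x(1) by auto
  next
    fix r assume "r \<in> {p \<bullet> y | y. \<gamma> y \<le> 1}"
    then obtain y where "r = p \<bullet> y" "\<gamma> y \<le> 1" by blast
    then show "r \<le> p \<bullet> x" using le[of y] \<open>0 \<le> p \<bullet> x\<close> by (meson mult_left_le order_trans)
  qed
  then show thesis using that x(1) le by simp
qed

lemma inner_le_dual_gauge: "p \<bullet> z \<le> dual_gauge \<gamma> p * \<gamma> z"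
  by (rule dual_gauge_maximizer[of p]) simp

lemma dual_gauge_nonneg: "0 \<le> dual_gauge \<gamma> p"
proof -
  obtain x where "\<gamma> x = 1" "p \<bullet> x = dual_gauge \<gamma> p" by (rule dual_gauge_maximizer[of p]) blast
  then show ?thesis using inner_le_dual_gauge[of p "- x"] by simp
qed

lemma dual_gauge_le:
  assumes "\<And>z. p \<bullet> z \<le> c * \<gamma> z"
  shows "dual_gauge \<gamma> p \<le> c"
proof -
  obtain x where "\<gamma> x = 1" "p \<bullet> x = dual_gauge \<gamma> p" by (rule dual_gauge_maximizer[of p]) blast
  then show ?thesis using assms[of x] by simp
qed

lemma unit_ball_dual_gauge: "unit_ball (dual_gauge \<gamma>) = dual_ball"
proof -
  have "dual_gauge \<gamma> p \<le> 1 \<longleftrightarrow> p \<in> dual_ball" for p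
  proof
    assume "dual_gauge \<gamma> p \<le> 1"
    then have "p \<bullet> z \<le> \<gamma> z" for z
      using inner_le_dual_gauge[of p z] nonneg[of z] by (meson mult_left_le_one_le order_trans dual_gauge_nonneg)
    then show "p \<in> dual_ball" unfolding dual_ball_def by blast
  qed (auto simp: dual_ball_def intro: dual_gauge_le)
  then show ?thesis unfolding unit_ball_def by blast
qed

text \<open>Separate \<open>x = z / \<gamma>(z)\<close> from the open unit ball by a functional \<open>a\<close>; homogeneity gives
  \<open>\<langle>a,y\<rangle> \<le> \<langle>a,x\<rangle> \<gamma>(y)\<close> for all \<open>y\<close>, so \<open>a / \<langle>a,x\<rangle>\<close> is a subgradient at \<open>z\<close>.\<close>

lemma subgrad_nonempty: "subgrad z \<noteq> {}"
proof (cases "z = 0")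
  case True
  then have "0 \<in> subgrad z" by (simp add: subgrad_def dual_ball_def nonneg)
  then show ?thesis by blast
next
  case False
  define x where "x = (1 / \<gamma> z) *\<^sub>R z"
  have x: "\<gamma> x = 1" using normalize[OF False] by (simp add: x_def)
  have "convex {y. \<gamma> y < 1}"
  proof (rule convexI)
    fix y1 y2 :: 'a and u v :: real
    assume "y1 \<in> {y. \<gamma> y < 1}" "y2 \<in> {y. \<gamma> y < 1}" "0 \<le> u" "0 \<le> v" "u + v = 1"
    moreover have "\<gamma> (u *\<^sub>R y1 + v *\<^sub>R y2) \<le> u * \<gamma> y1 + v * \<gamma> y2"
      using triangle[of "u *\<^sub>R y1" "v *\<^sub>R y2"] \<open>0 \<le> u\<close> \<open>0 \<le> v\<close> by (simp add: homogeneous)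
    ultimately show "u *\<^sub>R y1 + v *\<^sub>R y2 \<in> {y. \<gamma> y < 1}"
      using convex_bound_lt[of "\<gamma> y1" 1 "\<gamma> y2" u v] by simp
  qed
  moreover have "{y. \<gamma> y < 1} \<inter> {x} = {}" using x by auto
  moreover have "{y. \<gamma> y < 1} \<noteq> {}" using zero by (metis empty_iff mem_Collect_eq zero_less_one)
  ultimately obtain a b where "a \<noteq> 0" "\<forall>y\<in>{y. \<gamma> y < 1}. a \<bullet> y \<le> b" "\<forall>y\<in>{x}. b \<le> a \<bullet> y"
    using separating_hyperplane_sets[of "{y. \<gamma> y < 1}" "{x}"] by blast
  then have a: "a \<noteq> 0" "\<And>y. \<gamma> y < 1 \<Longrightarrow> a \<bullet> y \<le> b" "b \<le> a \<bullet> x"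
    by auto
  have le: "a \<bullet> y \<le> (a \<bullet> x) * \<gamma> y" for y
  proof (cases "y = 0")
    case False
    show ?thesis
    proof (rule field_le_mult_one_interval)
      fix t :: real assume t: "0 < t" "t < 1"
      have "\<gamma> ((t / \<gamma> y) *\<^sub>R y) = t" using t pos[OF False] by (simp add: homogeneous)
      then have "(t / \<gamma> y) * (a \<bullet> y) \<le> a \<bullet> x"
        using a(2)[of "(t / \<gamma> y) *\<^sub>R y"] a(3) t by simp
      then show "t * (a \<bullet> y) \<le> (a \<bullet> x) * \<gamma> y" using pos[OF False] by (simp add: field_simps)
    qed
  qed simp
  have "0 < a \<bullet> x"
  proof -
    have "0 < a \<bullet> a" using a(1) by simp
    also have "\<dots> \<le> (a \<bullet> x) * \<gamma> a" by (rule le)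
    finally show ?thesis using nonneg[of a] by (simp add: zero_less_mult_iff)
  qed
  define p where "p = (1 / (a \<bullet> x)) *\<^sub>R a"
  have "p \<in> dual_ball"
    unfolding dual_ball_def p_def using le \<open>0 < a \<bullet> x\<close> by (simp add: divide_le_eq mult.commute)
  moreover have "p \<bullet> z = \<gamma> z"
    using \<open>0 < a \<bullet> x\<close> pos[OF False] by (simp add: p_def x_def field_simps)
  ultimately show ?thesis unfolding subgrad_def by blast
qed

lemma compact_dual_ball: "compact dual_ball"
proof -
  have "dual_ball = (\<Inter>y. {p. y \<bullet> p \<le> \<gamma> y})"
    unfolding dual_ball_def by (auto simp: inner_commute)
  then have "closed dual_ball" by (auto intro: closed_halfspace_le)
  moreover have "bounded dual_ball"
  proof -
    obtain C where C: "0 \<le> C" "\<And>x. \<gamma> x \<le> C * norm x"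
      using norm_equivalence by blast
    have "norm p \<le> C" if "p \<in> dual_ball" for p
    proof -
      have "p \<bullet> p \<le> \<gamma> p" using that unfolding dual_ball_def by blast
      then have "norm p * norm p \<le> C * norm p"
        using C(2)[of p] power2_norm_eq_inner[of p] by (simp add: power2_eq_square)
      then show ?thesis using C(1) by (cases "p = 0") (auto simp: mult_le_cancel_right)
    qed
    then show ?thesis unfolding bounded_iff by blast
  qed
  ultimately show ?thesis by (simp add: compact_eq_bounded_closed)
qed

lemma convex_dual_ball: "convex dual_ball"
proof -
  have "dual_ball = (\<Inter>y. {p. y \<bullet> p \<le> \<gamma> y})"
    unfolding dual_ball_def by (auto simp: inner_commute)
  then show ?thesis by (auto intro: convex_INT convex_halfspace_le)
qed

lemma subgrad_eq: "subgrad z = dual_ball \<inter> {p. z \<bullet> p = \<gamma> z}"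
  unfolding subgrad_def by (auto simp: inner_commute)

lemma compact_subgrad: "compact (subgrad z)"
  unfolding subgrad_eq by (intro compact_Int_closed compact_dual_ball closed_hyperplane)

lemma convex_subgrad: "convex (subgrad z)"
  unfolding subgrad_eq by (intro convex_Int convex_dual_ball convex_hyperplane)

lemma subgrad_limit:
  assumes "z \<longlonglongrightarrow> z0" "q \<longlonglongrightarrow> q0" "\<And>n. q n \<in> subgrad (z n)"
  shows "q0 \<in> subgrad z0"
proof -
  have "q0 \<in> dual_ball"
    using closed_sequentially[OF compact_imp_closed[OF compact_dual_ball] _ assms(2)] assms(3)
    unfolding subgrad_def by blast
  moreover have "q0 \<bullet> z0 = \<gamma> z0"
  proof (rule LIMSEQ_unique)
    show "(\<lambda>n. q n \<bullet> z n) \<longlonglongrightarrow> q0 \<bullet> z0" by (rule tendsto_inner[OF assms(2,1)])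
    have "(\<lambda>n. \<gamma> (z n)) \<longlonglongrightarrow> \<gamma> z0" by (rule isCont_tendsto_compose[OF isCont assms(1)])
    then show "(\<lambda>n. q n \<bullet> z n) \<longlonglongrightarrow> \<gamma> z0" using assms(3) by (simp add: subgrad_def)
  qed
  ultimately show ?thesis unfolding subgrad_def by blast
qed

lemma ncone_iff_subgrad:
  assumes "p \<in> dual_ball"
  shows "y \<in> ncone \<gamma> p \<longleftrightarrow> p \<in> subgrad y"
proof
  assume y: "y \<in> ncone \<gamma> p"
  show "p \<in> subgrad y"
  proof (cases "dual_gauge \<gamma> p = 1")
    case True
    then obtain t x where "y = t *\<^sub>R x" "0 \<le> t" "\<gamma> x \<le> 1" "p \<bullet> x = 1"
      using y unfolding ncone_def face_def unit_ball_def by auto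
    moreover have "p \<bullet> x \<le> \<gamma> x" using assms unfolding dual_ball_def by blast
    ultimately show ?thesis using assms unfolding subgrad_def by (simp add: homogeneous)
  next
    case False
    then show ?thesis using y assms unfolding ncone_def subgrad_def by simp
  qed
next
  assume y: "p \<in> subgrad y"
  have "dual_gauge \<gamma> p \<le> 1" using assms unit_ball_dual_gauge unfolding unit_ball_def by blast
  show "y \<in> ncone \<gamma> p"
  proof (cases "y = 0")
    case True
    obtain x where x: "\<gamma> x = 1" "p \<bullet> x = dual_gauge \<gamma> p" by (rule dual_gauge_maximizer[of p]) blast
    show ?thesis
    proof (cases "dual_gauge \<gamma> p = 1")
      case True
      then have "x \<in> face \<gamma> p" using x unfolding face_def unit_ball_def by simp
      moreover have "y = 0 *\<^sub>R x" using \<open>y = 0\<close> by simp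
      ultimately have "y \<in> {t *\<^sub>R x | t x. 0 \<le> t \<and> x \<in> face \<gamma> p}" by blast
      then show ?thesis using True by (simp add: ncone_def)
    qed (simp add: ncone_def \<open>y = 0\<close>)
  next
    case False
    define x where "x = (1 / \<gamma> y) *\<^sub>R y"
    have x: "\<gamma> x = 1" "p \<bullet> x = 1"
      using y normalize[OF False] pos[OF False] by (auto simp: x_def subgrad_def)
    then have "dual_gauge \<gamma> p = 1"
      using inner_le_dual_gauge[of p x] \<open>dual_gauge \<gamma> p \<le> 1\<close> by simp
    moreover have "x \<in> face \<gamma> p" using x unfolding face_def unit_ball_def by simp
    moreover have "y = \<gamma> y *\<^sub>R x" using pos[OF False] by (simp add: x_def)
    ultimately show ?thesis unfolding ncone_def using nonneg[of y] by auto
  qed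
qed

lemma elem_set_iff:
  assumes "\<forall>s\<in>S. p s \<in> dual_ball"
  shows "y \<in> elem_set \<gamma> S p \<longleftrightarrow> (\<forall>s\<in>S. p s \<in> subgrad (y - s))"
proof -
  have "y \<in> (\<lambda>z. s + z) ` ncone \<gamma> (p s) \<longleftrightarrow> y - s \<in> ncone \<gamma> (p s)" for s
    by (auto intro: image_eqI[of _ _ "y - s"])
  then show ?thesis unfolding elem_set_def using ncone_iff_subgrad assms by auto
qed

lemma mem_EH_iff:
  "y \<in> EH \<gamma> S \<longleftrightarrow> (\<exists>p. (\<forall>s\<in>S. p s \<in> dual_ball) \<and> y \<in> elem_set \<gamma> S p \<and> bounded (elem_set \<gamma> S p))"
  unfolding EH_def unit_ball_dual_gauge by blast

lemma elem_set_ray: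
  assumes "\<forall>s\<in>S. p s \<in> dual_ball" "y \<in> elem_set \<gamma> S p" "\<forall>s\<in>S. p s \<bullet> d = \<gamma> d" "0 \<le> t"
  shows "y + t *\<^sub>R d \<in> elem_set \<gamma> S p"
  unfolding elem_set_iff[OF assms(1)]
proof
  fix s assume s: "s \<in> S"
  have "p s \<in> subgrad (y - s)" using assms(1,2) s elem_set_iff by blast
  then have "p s \<bullet> (y + t *\<^sub>R d - s) = \<gamma> (y - s) + t * \<gamma> d"
    using assms(3) s by (simp add: subgrad_def inner_diff_right inner_add_right)
  moreover have "\<gamma> (y + t *\<^sub>R d - s) \<le> \<gamma> (y - s) + t * \<gamma> d"
    using triangle[of "y - s" "t *\<^sub>R d"] assms(4) by (simp add: homogeneous algebra_simps)
  moreover have "p s \<bullet> (y + t *\<^sub>R d - s) \<le> \<gamma> (y + t *\<^sub>R d - s)"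
    using assms(1) s unfolding dual_ball_def by blast
  ultimately show "p s \<in> subgrad (y + t *\<^sub>R d - s)" using assms(1) s unfolding subgrad_def by simp
qed

section \<open>Optimality condition for Fermat--Weber points\<close>

lemma FW_point_descent:
  assumes "finite S" "\<forall>s\<in>S. 0 \<le> u s" "is_FW_point \<gamma> S u x" "0 < t"
    and q: "\<forall>s\<in>S. q s \<in> subgrad (x - s + t *\<^sub>R d)"
  shows "0 \<le> (\<Sum>s\<in>S. u s * (q s \<bullet> d))"
proof -
  have "\<gamma> (x + t *\<^sub>R d - s) = q s \<bullet> (x - s) + t * (q s \<bullet> d)" if "s \<in> S" for s
  proof -
    have "\<gamma> (x + t *\<^sub>R d - s) = \<gamma> (x - s + t *\<^sub>R d)" by (simp add: algebra_simps)
    also have "\<dots> = q s \<bullet> (x - s + t *\<^sub>R d)" using q that by (simp add: subgrad_def)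
    also have "\<dots> = q s \<bullet> (x - s) + t * (q s \<bullet> d)" by (simp add: inner_add_right)
    finally show ?thesis .
  qed
  then have "fw_objective \<gamma> S u (x + t *\<^sub>R d) = (\<Sum>s\<in>S. u s * (q s \<bullet> (x - s) + t * (q s \<bullet> d)))"
    unfolding fw_objective_def by simp
  also have "\<dots> \<le> (\<Sum>s\<in>S. u s * (\<gamma> (x - s) + t * (q s \<bullet> d)))"
    using assms(2) q by (intro sum_mono mult_left_mono) (auto simp: subgrad_def dual_ball_def)
  also have "\<dots> = fw_objective \<gamma> S u x + t * (\<Sum>s\<in>S. u s * (q s \<bullet> d))"
    unfolding fw_objective_def by (simp add: algebra_simps sum.distrib sum_distrib_left)
  finally show ?thesis
    using assms(3,4) unfolding is_FW_point_def by (smt (verit) zero_le_mult_iff)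
qed

text \<open>Subgradients at \<open>x - s + t d\<close> are descent witnesses (previous lemma); letting \<open>t \<rightarrow> 0\<close> along a
  common convergent subsequence yields subgradients at \<open>x - s\<close>.\<close>

lemma FW_point_directional:
  assumes "finite S" "\<forall>s\<in>S. 0 \<le> u s" "is_FW_point \<gamma> S u x"
  obtains p where "\<forall>s\<in>S. p s \<in> subgrad (x - s)" "0 \<le> (\<Sum>s\<in>S. u s * (p s \<bullet> d))"
proof -
  define t where "t n = 1 / real (Suc n)" for n
  define q where "q s n = (SOME q. q \<in> subgrad (x - s + t n *\<^sub>R d))" for s n
  have q: "q s n \<in> subgrad (x - s + t n *\<^sub>R d)" for s n
    unfolding q_def using subgrad_nonempty some_in_eq by blast
  obtain r p where r: "strict_mono r" and p: "\<forall>s\<in>S. p s \<in> dual_ball \<and> (q s \<circ> r) \<longlonglongrightarrow> p s"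
    using common_convergent_subseq[OF assms(1) compact_dual_ball, of q] q
    unfolding subgrad_def by blast
  have "t \<longlonglongrightarrow> 0" unfolding t_def using LIMSEQ_Suc[OF lim_1_over_n] by simp
  then have t: "(\<lambda>n. t (r n)) \<longlonglongrightarrow> 0" using LIMSEQ_subseq_LIMSEQ[OF _ r] by (simp add: o_def)
  have "p s \<in> subgrad (x - s)" if "s \<in> S" for s
  proof (rule subgrad_limit)
    show "(\<lambda>n. x - s + t (r n) *\<^sub>R d) \<longlonglongrightarrow> x - s"
      using tendsto_add[OF tendsto_const tendsto_scaleR[OF t tendsto_const]] by simp
    show "(\<lambda>n. q s (r n)) \<longlonglongrightarrow> p s" using p that by (simp add: o_def)
  qed (rule q)
  moreover have lim: "(\<lambda>n. \<Sum>s\<in>S. u s * (q s (r n) \<bullet> d)) \<longlonglongrightarrow> (\<Sum>s\<in>S. u s * (p s \<bullet> d))"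
  proof (intro tendsto_sum tendsto_mult tendsto_const tendsto_inner)
    show "(\<lambda>n. q s (r n)) \<longlonglongrightarrow> p s" if "s \<in> S" for s using p that by (simp add: o_def)
  qed
  moreover have "0 \<le> (\<Sum>s\<in>S. u s * (p s \<bullet> d))"
  proof (rule LIMSEQ_le_const[OF lim], intro exI allI impI)
    fix n
    show "0 \<le> (\<Sum>s\<in>S. u s * (q s (r n) \<bullet> d))"
      by (rule FW_point_descent[OF assms, where t = "t (r n)" and q = "\<lambda>s. q s (r n)"])
        (use q in \<open>auto simp: t_def\<close>)
  qed
  ultimately show thesis using that by blast
qed

text \<open>Otherwise \<open>0\<close> is separated from the compact convex set of weighted subgradient sums,
  and the separating direction contradicts the previous lemma.\<close>

lemma FW_point_subgradients:
  assumes "finite S" "\<forall>s\<in>S. 0 \<le> u s" "is_FW_point \<gamma> S u x"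
  obtains p where "\<forall>s\<in>S. p s \<in> subgrad (x - s)" "(\<Sum>s\<in>S. u s *\<^sub>R p s) = 0"
proof -
  define M where "M = {\<Sum>s\<in>S. u s *\<^sub>R p s | p. \<forall>s\<in>S. p s \<in> subgrad (x - s)}"
  have "compact M \<and> convex M"
    unfolding M_def by (rule compact_convex_weighted_sums[OF assms(1)]) (simp add: compact_subgrad convex_subgrad)
  then have "compact M" "convex M" by blast+
  have "0 \<in> M"
  proof (rule ccontr)
    assume "0 \<notin> M"
    then obtain a b where ab: "0 < b" "\<forall>m\<in>M. b < a \<bullet> m"
      using separating_hyperplane_closed_0[OF \<open>convex M\<close> compact_imp_closed[OF \<open>compact M\<close>]] by blast
    obtain p where p: "\<forall>s\<in>S. p s \<in> subgrad (x - s)" "0 \<le> (\<Sum>s\<in>S. u s * (p s \<bullet> - a))"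
      by (rule FW_point_directional[OF assms, where d = "- a"])
    have "(\<Sum>s\<in>S. u s *\<^sub>R p s) \<in> M" unfolding M_def using p(1) by blast
    then have "b < a \<bullet> (\<Sum>s\<in>S. u s *\<^sub>R p s)" using ab by blast
    also have "\<dots> = (\<Sum>s\<in>S. u s * (a \<bullet> p s))" by (simp add: inner_sum_right)
    also have "\<dots> = - (\<Sum>s\<in>S. u s * (p s \<bullet> - a))" by (simp add: inner_commute[of a] sum_negf)
    finally show False using ab(1) p(2) by simp
  qed
  then obtain p where p: "\<forall>s\<in>S. p s \<in> subgrad (x - s)" "0 = (\<Sum>s\<in>S. u s *\<^sub>R p s)"
    unfolding M_def by blast
  show thesis by (rule that[OF p(1) p(2)[symmetric]])
qed

section \<open>Bounded elementary sets\<close>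

lemma bounded_elem_set:
  assumes "finite S" "\<forall>s\<in>S. 0 \<le> w s" "\<forall>s\<in>S. p s \<in> dual_ball"
    and less: "dual_gauge \<gamma> (\<Sum>s\<in>S. w s *\<^sub>R p s) < sum w S"
  shows "bounded (elem_set \<gamma> S p)"
proof -
  define q where "q = (\<Sum>s\<in>S. w s *\<^sub>R p s)"
  define c where "c = (\<Sum>s\<in>S. w s * \<gamma> s) - (\<Sum>s\<in>S. w s * (p s \<bullet> s))"
  have "\<gamma> y \<le> c / (sum w S - dual_gauge \<gamma> q)" if y: "y \<in> elem_set \<gamma> S p" for y
  proof -
    have "sum w S * \<gamma> y - (\<Sum>s\<in>S. w s * \<gamma> s) = (\<Sum>s\<in>S. w s * (\<gamma> y - \<gamma> s))"
      by (simp add: sum_distrib_right right_diff_distrib sum_subtractf)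
    also have "\<dots> \<le> (\<Sum>s\<in>S. w s * \<gamma> (y - s))"
      using assms(2) diff_le by (intro sum_mono mult_left_mono) auto
    also have "\<dots> = (\<Sum>s\<in>S. w s * (p s \<bullet> (y - s)))"
      using y elem_set_iff[OF assms(3)] by (intro sum.cong refl) (auto simp: subgrad_def)
    also have "\<dots> = q \<bullet> y - (\<Sum>s\<in>S. w s * (p s \<bullet> s))"
      by (simp add: q_def inner_sum_left inner_diff_right algebra_simps sum_subtractf)
    also have "\<dots> \<le> dual_gauge \<gamma> q * \<gamma> y - (\<Sum>s\<in>S. w s * (p s \<bullet> s))"
      using inner_le_dual_gauge by simp
    finally have "(sum w S - dual_gauge \<gamma> q) * \<gamma> y \<le> c" by (simp add: c_def algebra_simps)
    then show ?thesis using less by (simp add: q_def pos_le_divide_eq mult.commute)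
  qed
  then show ?thesis unfolding bounded_iff_gauge_bounded by blast
qed

lemma inner_eq_gauge_if_weighted_sum_ge:
  assumes "finite S" "\<forall>s\<in>S. 0 < w s" "\<forall>s\<in>S. p s \<in> dual_ball"
    and x: "\<gamma> x = 1" "sum w S \<le> (\<Sum>s\<in>S. w s *\<^sub>R p s) \<bullet> x"
  shows "\<forall>s\<in>S. p s \<bullet> x = \<gamma> x"
proof
  have terms: "0 \<le> w s * (1 - p s \<bullet> x)" if "s \<in> S" for s
  proof -
    have "p s \<in> dual_ball" using assms(3) that by blast
    then have "p s \<bullet> x \<le> \<gamma> x" unfolding dual_ball_def by blast
    moreover have "0 < w s" using assms(2) that by blast
    ultimately show ?thesis using x(1) by simp
  qed
  have "(\<Sum>s\<in>S. w s * (1 - p s \<bullet> x)) = (\<Sum>s\<in>S. w s - w s * (p s \<bullet> x))"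
    by (simp add: right_diff_distrib)
  also have "\<dots> = sum w S - (\<Sum>s\<in>S. w s * (p s \<bullet> x))" by (rule sum_subtractf)
  also have "\<dots> = sum w S - (\<Sum>s\<in>S. w s *\<^sub>R p s) \<bullet> x" by (simp add: inner_sum_left)
  finally have "(\<Sum>s\<in>S. w s * (1 - p s \<bullet> x)) \<le> 0" using x(2) by simp
  moreover have "0 \<le> (\<Sum>s\<in>S. w s * (1 - p s \<bullet> x))" by (rule sum_nonneg) (rule terms)
  ultimately have sum_0: "(\<Sum>s\<in>S. w s * (1 - p s \<bullet> x)) = 0" by (intro antisym)
  fix s assume "s \<in> S"
  have "w s * (1 - p s \<bullet> x) = 0"
    by (rule sum_nonneg_0[OF assms(1), where f = "\<lambda>s. w s * (1 - p s \<bullet> x)"])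
      (use terms sum_0 \<open>s \<in> S\<close> in auto)
  moreover have "w s \<noteq> 0" using assms(2) \<open>s \<in> S\<close> by force
  ultimately show "p s \<bullet> x = \<gamma> x" using x(1) by simp
qed

text \<open>In case of equality, a maximiser \<open>x\<close> of the dual gauge spans a ray contained in the
  elementary set.\<close>

lemma dual_gauge_less_if_bounded_elem_set:
  assumes "finite S" "\<forall>s\<in>S. 0 < w s" "\<forall>s\<in>S. p s \<in> dual_ball"
    and y: "y \<in> elem_set \<gamma> S p" and "bounded (elem_set \<gamma> S p)"
  shows "dual_gauge \<gamma> (\<Sum>s\<in>S. w s *\<^sub>R p s) < sum w S"
proof (rule ccontr)
  let ?q = "\<Sum>s\<in>S. w s *\<^sub>R p s"
  assume "\<not> dual_gauge \<gamma> ?q < sum w S"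
  moreover obtain x where x: "\<gamma> x = 1" "?q \<bullet> x = dual_gauge \<gamma> ?q"
    by (rule dual_gauge_maximizer[of ?q]) blast
  ultimately have "\<forall>s\<in>S. p s \<bullet> x = \<gamma> x"
    using inner_eq_gauge_if_weighted_sum_ge[OF assms(1-3) x(1)] by simp
  then have ray: "y + t *\<^sub>R x \<in> elem_set \<gamma> S p" if "0 \<le> t" for t
    using elem_set_ray[OF assms(3) y _ that] by blast
  obtain B where B: "\<forall>z\<in>elem_set \<gamma> S p. \<gamma> z \<le> B"
    using \<open>bounded (elem_set \<gamma> S p)\<close> unfolding bounded_iff_gauge_bounded by blast
  define t where "t = B + 1 + \<gamma> y"
  have "0 \<le> t" using B y nonneg[of y] by (auto simp: t_def)
  have "\<gamma> (t *\<^sub>R x) - \<gamma> (- y) \<le> \<gamma> (t *\<^sub>R x - - y)" by (rule diff_le)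
  then have "B + 1 \<le> \<gamma> (y + t *\<^sub>R x)"
    using \<open>0 \<le> t\<close> x(1) by (simp add: homogeneous t_def add.commute)
  moreover have "\<gamma> (y + t *\<^sub>R x) \<le> B" using B ray[OF \<open>0 \<le> t\<close>] by blast
  ultimately show False by linarith
qed

lemma FW_point_of_elem_set:
  assumes "finite A" "\<forall>s\<in>A. 0 \<le> w s" "\<forall>s\<in>A. p s \<in> dual_ball" "y \<in> elem_set \<gamma> A p"
    and "dual_gauge \<gamma> (\<Sum>s\<in>A. w s *\<^sub>R p s) \<le> v"
  shows "is_FW_point \<gamma> (A \<union> {y}) (wsum_weights A w {y} (\<lambda>_. v)) y"
  unfolding is_FW_point_def
proof
  fix z
  define q where "q = (\<Sum>s\<in>A. w s *\<^sub>R p s)"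
  have obj: "fw_objective \<gamma> (A \<union> {y}) (wsum_weights A w {y} (\<lambda>_. v)) x =
      fw_objective \<gamma> A w x + v * \<gamma> (x - y)" for x
    using sum_wsum_weights[of A "{y}" w "\<lambda>_. v" "\<lambda>s. \<gamma> (x - s)"] assms(1)
    by (simp add: fw_objective_def)
  have "fw_objective \<gamma> A w y = (\<Sum>s\<in>A. w s * (p s \<bullet> (y - s)))"
    unfolding fw_objective_def using assms(3,4) elem_set_iff
    by (intro sum.cong refl) (auto simp: subgrad_def)
  then have "fw_objective \<gamma> A w y + q \<bullet> (z - y) = (\<Sum>s\<in>A. w s * (p s \<bullet> (y - s)) + w s * (p s \<bullet> (z - y)))"
    by (simp add: q_def inner_sum_left sum.distrib)
  also have "\<dots> = (\<Sum>s\<in>A. w s * (p s \<bullet> (z - s)))"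
    by (intro sum.cong refl) (simp add: inner_diff_right algebra_simps)
  also have "\<dots> \<le> fw_objective \<gamma> A w z"
    unfolding fw_objective_def using assms(2,3) by (intro sum_mono mult_left_mono) (auto simp: dual_ball_def)
  finally have "fw_objective \<gamma> A w y + q \<bullet> (z - y) \<le> fw_objective \<gamma> A w z" .
  moreover have "q \<bullet> (y - z) \<le> v * \<gamma> (z - y)"
  proof -
    have "q \<bullet> (y - z) \<le> dual_gauge \<gamma> q * \<gamma> (y - z)" by (rule inner_le_dual_gauge)
    also have "\<dots> \<le> v * \<gamma> (y - z)" using assms(5) nonneg by (simp add: q_def mult_right_mono)
    finally show ?thesis using minus[of "z - y"] by simp
  qed
  moreover have "q \<bullet> (y - z) = - (q \<bullet> (z - y))" by (simp add: inner_diff_right)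
  ultimately show "fw_objective \<gamma> (A \<union> {y}) (wsum_weights A w {y} (\<lambda>_. v)) y
      \<le> fw_objective \<gamma> (A \<union> {y}) (wsum_weights A w {y} (\<lambda>_. v)) z"
    unfolding obj by simp
qed

lemma FW_point_mem_EH:
  assumes D: "finite D" "\<forall>s\<in>D. 0 < w s" and C: "finite C" "\<forall>s\<in>C. 0 < v s"
    and less: "sum v C < sum w D"
    and FW: "is_FW_point \<gamma> (D \<union> C) (wsum_weights D w C v) x"
  shows "x \<in> EH \<gamma> D"
proof -
  have "finite (D \<union> C)" using D C by blast
  moreover have "\<forall>s\<in>D \<union> C. 0 \<le> wsum_weights D w C v s"
    using D(2) C(2) unfolding wsum_weights_def by (auto intro: add_nonneg_nonneg less_imp_le)
  ultimately obtain p where p: "\<forall>s\<in>D \<union> C. p s \<in> subgrad (x - s)"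
    "(\<Sum>s\<in>D \<union> C. wsum_weights D w C v s *\<^sub>R p s) = 0"
    by (rule FW_point_subgradients[OF _ _ FW])
  have dual: "\<forall>s\<in>D \<union> C. p s \<in> dual_ball" using p(1) unfolding subgrad_def by blast
  have sums: "(\<Sum>s\<in>D. w s *\<^sub>R p s) = - (\<Sum>s\<in>C. v s *\<^sub>R p s)"
    using p(2) sum_wsum_weights[of D C w v p] D(1) C(1) by (simp add: eq_neg_iff_add_eq_0)
  have "dual_gauge \<gamma> (\<Sum>s\<in>D. w s *\<^sub>R p s) \<le> sum v C"
  proof (rule dual_gauge_le)
    fix z
    have "(\<Sum>s\<in>D. w s *\<^sub>R p s) \<bullet> z = (\<Sum>s\<in>C. v s * (p s \<bullet> - z))"
      by (simp add: sums inner_sum_left sum_negf)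
    also have "\<dots> \<le> (\<Sum>s\<in>C. v s * \<gamma> z)"
    proof (intro sum_mono mult_left_mono)
      fix s assume "s \<in> C"
      then have "p s \<in> dual_ball" using dual by blast
      then have "p s \<bullet> - z \<le> \<gamma> (- z)" unfolding dual_ball_def by blast
      then show "p s \<bullet> - z \<le> \<gamma> z" by simp
      show "0 \<le> v s" using C(2) \<open>s \<in> C\<close> by (simp add: less_imp_le)
    qed
    finally show "(\<Sum>s\<in>D. w s *\<^sub>R p s) \<bullet> z \<le> sum v C * \<gamma> z" by (simp add: sum_distrib_right)
  qed
  then have "bounded (elem_set \<gamma> D p)"
    using bounded_elem_set[of D w p] D dual less by (simp add: less_imp_le)
  moreover have "x \<in> elem_set \<gamma> D p" using elem_set_iff[of D p x] p(1) dual by simp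
  ultimately show ?thesis unfolding mem_EH_iff using dual by blast
qed

lemma uniformly_robust_if_bounded_EH:
  assumes "\<And>A. finite A \<Longrightarrow> bounded (EH \<gamma> A)"
  shows "uniformly_robust \<gamma>"
  unfolding uniformly_robust_def skewness_eq_1 mult_1
proof (intro allI impI)
  fix D :: "'a set" and w :: "'a \<Rightarrow> real"
  assume D: "finite D \<and> (\<forall>s\<in>D. 0 < w s)"
  show "\<exists>K. bounded K \<and> (\<forall>C v. finite C \<and> (\<forall>s\<in>C. 0 < v s) \<and> sum v C < sum w D \<longrightarrow>
      {x. is_FW_point \<gamma> (D \<union> C) (wsum_weights D w C v) x} \<subseteq> K)"
  proof (intro exI[of _ "EH \<gamma> D"] conjI allI impI subsetI)
    show "bounded (EH \<gamma> D)" using assms D by blast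
  qed (use D FW_point_mem_EH in blast)
qed

lemma bounded_EH_if_uniformly_robust:
  assumes "uniformly_robust \<gamma>" "finite A"
  shows "bounded (EH \<gamma> A)"
proof -
  define one :: "'a \<Rightarrow> real" where "one = (\<lambda>_. 1)"
  obtain K where "bounded K" and K: "\<And>C v. finite C \<and> (\<forall>s\<in>C. 0 < v s) \<and> skewness \<gamma> * sum v C < sum one A \<Longrightarrow>
      {x. is_FW_point \<gamma> (A \<union> C) (wsum_weights A one C v) x} \<subseteq> K"
    using assms unfolding uniformly_robust_def one_def by (metis zero_less_one)
  have "y \<in> K" if y: "y \<in> EH \<gamma> A" for y
  proof -
    obtain p where p: "\<forall>s\<in>A. p s \<in> dual_ball" "y \<in> elem_set \<gamma> A p" "bounded (elem_set \<gamma> A p)"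
      using y unfolding mem_EH_iff by blast
    define g where "g = dual_gauge \<gamma> (\<Sum>s\<in>A. one s *\<^sub>R p s)"
    have "g < sum one A"
      unfolding g_def by (rule dual_gauge_less_if_bounded_elem_set[OF assms(2) _ p]) (simp add: one_def)
    define v where "v = (g + sum one A) / 2"
    have "0 \<le> g" unfolding g_def by (rule dual_gauge_nonneg)
    then have v: "0 < v" "v < sum one A" "g \<le> v" using \<open>g < sum one A\<close> by (auto simp: v_def)
    have "is_FW_point \<gamma> (A \<union> {y}) (wsum_weights A one {y} (\<lambda>_. v)) y"
      by (rule FW_point_of_elem_set[OF assms(2) _ p(1,2)]) (use v(3) in \<open>simp_all add: one_def g_def\<close>)
    moreover have "skewness \<gamma> * sum (\<lambda>_. v) {y} < sum one A" using v(2) by (simp add: skewness_eq_1)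
    ultimately show "y \<in> K" using K[of "{y}" "\<lambda>_. v"] v(1) by blast
  qed
  then show ?thesis using \<open>bounded K\<close> bounded_subset by blast
qed

end

theorem mainTheorem12:
  fixes \<gamma> :: "'a::euclidean_space \<Rightarrow> real"
  assumes "is_norm \<gamma>"
  shows "uniformly_robust \<gamma> \<longleftrightarrow> (\<forall>A::'a set. finite A \<longrightarrow> bounded (EH \<gamma> A))"
proof -
  interpret gauge_norm \<gamma> by (rule gauge_norm.intro) (rule assms)
  show ?thesis using uniformly_robust_if_bounded_EH bounded_EH_if_uniformly_robust by blast
qed

end
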